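(* For all integers $n\geq1$ and all $i,j\in\mathbb N$ the following polynomial identities hold: \begin{align*} U_{n+i}U_{n+j}-U_{n-1}U_{n+1+i+j}&=U_iU_j,\\ T_{n+i}T_{n+j}-T_{n-1}T_{n+1+i+j}&=(1-x^2)U_iU_j,\\ T_{n+i}U_{n+j}-U_{n-1}T_{n+1+i+j}&=T_iU_j,\\ T_{n+i}U_{n+j}-T_{n-1}U_{n+1+i+j}&=-U_iT_{j+2},\\ T_{n+i}T_{n+j}-(x^2-1)U_{n-1}U_{n-1+i+j}&=T_iT_j. \end{align*}
   Context: $T_n=T_n(x)$ and $U_n=U_n(x)$ denote the Chebyshev polynomials of the first and second kind, defined by $T_0=1$, $T_1=x$, $T_{n+1}=2xT_n-T_{n-1}$ and $U_0=1$, $U_1=2x$, $U_{n+1}=2xU_n-U_{n-1}$ for $n\geq1$. *)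

theory Defs
  imports "HOL-Computational_Algebra.Polynomial"
begin

fun cheb_T :: "nat \<Rightarrow> 'a::comm_ring_1 poly" where
  "cheb_T 0 = 1"
| "cheb_T (Suc 0) = [:0, 1:]"
| "cheb_T (Suc (Suc n)) = [:0, 2:] * cheb_T (Suc n) - cheb_T n"

fun cheb_U :: "nat \<Rightarrow> 'a::comm_ring_1 poly" where
  "cheb_U 0 = 1"
| "cheb_U (Suc 0) = [:0, 2:]"
| "cheb_U (Suc (Suc n)) = [:0, 2:] * cheb_U (Suc n) - cheb_U n"

end

theory Submission
  imports Defs
begin

text \<open>All five identities concern sequences with \<open>s(k+2) = X s(k+1) - s(k)\<close>. For two
  such sequences \<open>a, b\<close> the expression \<open>a(m+1+p) b(m+1+q) - a(m) b(m+2+p+q)\<close> does not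
  depend on \<open>m\<close>, and as a function of \<open>p\<close> it again satisfies the recurrence; comparing
  initial values, it equals \<open>U(p)\<close> times its value at \<open>m = p = 0\<close>. Taking \<open>a, b \<in> {T, U}\<close>
  gives the first four identities. In the fifth, both sides satisfy the recurrence in \<open>i\<close>
  and in \<open>j\<close>, so it suffices to check \<open>i, j \<in> {0, 1}\<close>, where the left-hand side is
  \<open>x^(i+j)\<close> times \<open>U(m+1)\<^sup>2 - U(m) U(m+2)\<close>, which is \<open>1\<close> by the first identity.\<close>

definition cheb_rec :: "'a::comm_ring_1 \<Rightarrow> (nat \<Rightarrow> 'a) \<Rightarrow> bool" where
  "cheb_rec X s \<longleftrightarrow> (\<forall>k. s (Suc (Suc k)) = X * s (Suc k) - s k)"

lemma cheb_recD: "cheb_rec X s \<Longrightarrow> s (Suc (Suc k)) = X * s (Suc k) - s k"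
  by (simp add: cheb_rec_def)

lemma cheb_rec_eqI:
  assumes "cheb_rec X s" "cheb_rec X t" "s 0 = t 0" "s 1 = t 1"
  shows "s = t"
proof
  fix k
  have "s k = t k \<and> s (Suc k) = t (Suc k)"
    by (induction k)
      (simp_all add: assms(3) assms(4)[unfolded One_nat_def] cheb_recD[OF assms(1)]
        cheb_recD[OF assms(2)])
  then show "s k = t k" ..
qed

lemma cheb_rec_eqI2:
  assumes "\<And>j. cheb_rec X (\<lambda>i. f i j)" "\<And>i. cheb_rec X (f i)"
    and "\<And>j. cheb_rec X (\<lambda>i. g i j)" "\<And>i. cheb_rec X (g i)"
    and "\<And>i j. i < 2 \<Longrightarrow> j < 2 \<Longrightarrow> f i j = g i j"
  shows "f = g"
proof -
  have "f i = g i" if "i < 2" for i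
    by (rule cheb_rec_eqI[OF assms(2,4)]) (simp_all add: assms(5) that)
  then have "(\<lambda>i. f i j) = (\<lambda>i. g i j)" for j
    by (intro cheb_rec_eqI[OF assms(1,3)]) simp_all
  then show ?thesis
    by (metis ext)
qed

lemma cheb_rec_cross_product_shift:
  assumes "cheb_rec X a" "cheb_rec X b"
  shows "a (Suc m) * b (Suc m + q) - a m * b (Suc (Suc m) + q)
       = a 1 * b (Suc q) - a 0 * b (Suc (Suc q))"
proof (induction m)
  case (Suc m)
  have "a (Suc (Suc m)) * b (Suc (Suc m) + q) - a (Suc m) * b (Suc (Suc (Suc m)) + q)
      = a (Suc m) * b (Suc m + q) - a m * b (Suc (Suc m) + q)"
    by (simp add: cheb_recD[OF assms(1)] cheb_recD[OF assms(2)] algebra_simps)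
  with Suc show ?case by simp
qed simp

lemma cheb_rec_product_identity:
  assumes "cheb_rec X a" "cheb_rec X b" "cheb_rec X u" "u 0 = 1" "u 1 = X"
  shows "a (Suc m + p) * b (Suc m + q) - a m * b (Suc (Suc m) + p + q)
       = u p * (a 1 * b (Suc q) - a 0 * b (Suc (Suc q)))"
proof -
  let ?D = "a 1 * b (Suc q) - a 0 * b (Suc (Suc q))"
  have D: "a (Suc m) * b (Suc m + q) - a m * b (Suc (Suc m) + q) = ?D"
    by (rule cheb_rec_cross_product_shift[OF assms(1,2)])
  have "(\<lambda>p. a (Suc m + p) * b (Suc m + q) - a m * b (Suc (Suc m) + p + q)) = (\<lambda>p. u p * ?D)"
  proof (rule cheb_rec_eqI)
    show "cheb_rec X (\<lambda>p. a (Suc m + p) * b (Suc m + q) - a m * b (Suc (Suc m) + p + q))"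
      by (simp add: cheb_rec_def cheb_recD[OF assms(1)] cheb_recD[OF assms(2)] algebra_simps)
    show "cheb_rec X (\<lambda>p. u p * ?D)"
      by (simp add: cheb_rec_def cheb_recD[OF assms(3)] algebra_simps)
    have a_step: "a (Suc m + 1) = X * a (Suc m) - a m"
      using cheb_recD[OF assms(1), of m] by simp
    have b_step: "b (Suc (Suc m) + 1 + q) = X * b (Suc (Suc m) + q) - b (Suc m + q)"
      using cheb_recD[OF assms(2), of "Suc m + q"] by simp
    have "a (Suc m + 1) * b (Suc m + q) - a m * b (Suc (Suc m) + 1 + q)
        = X * (a (Suc m) * b (Suc m + q) - a m * b (Suc (Suc m) + q))"
      unfolding a_step b_step by (simp add: algebra_simps)
    then show "a (Suc m + 1) * b (Suc m + q) - a m * b (Suc (Suc m) + 1 + q) = u 1 * ?D"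
      by (simp only: D assms(5))
  qed (use D assms(4) in simp)
  then show ?thesis by (rule fun_cong)
qed

locale chebyshev =
  fixes x :: "'a::comm_ring_1" and T U :: "nat \<Rightarrow> 'a"
  assumes cheb_rec_T: "cheb_rec (2 * x) T" and cheb_rec_U: "cheb_rec (2 * x) U"
    and T_0: "T 0 = 1" and T_1: "T 1 = x" and U_0: "U 0 = 1" and U_1: "U 1 = 2 * x"
begin

lemma initial_values [simp]: "T 0 = 1" "T (Suc 0) = x" "U 0 = 1" "U (Suc 0) = 2 * x"
  using T_0 T_1 U_0 U_1 by simp_all

lemmas T_Suc_Suc = cheb_recD[OF cheb_rec_T] and U_Suc_Suc = cheb_recD[OF cheb_rec_U]

lemma T_Suc_eq: "T (Suc k) = U (Suc k) - x * U k"
proof -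
  have "(\<lambda>k. T (Suc k)) = (\<lambda>k. U (Suc k) - x * U k)"
  proof (rule cheb_rec_eqI)
    show "cheb_rec (2 * x) (\<lambda>k. T (Suc k))" "cheb_rec (2 * x) (\<lambda>k. U (Suc k) - x * U k)"
      by (simp_all add: cheb_rec_def T_Suc_Suc U_Suc_Suc algebra_simps)
  qed (simp_all add: T_Suc_Suc U_Suc_Suc algebra_simps)
  then show ?thesis by (rule fun_cong)
qed

lemma x_T_diff: "x * T (Suc k) - T (Suc (Suc k)) = (1 - x\<^sup>2) * U k"
  by (simp add: T_Suc_eq U_Suc_Suc algebra_simps power2_eq_square)

lemma x_U_diff: "x * U (Suc k) - U (Suc (Suc k)) = - T (Suc (Suc k))"
  by (simp add: T_Suc_eq[of "Suc k"])

lemma product_identity: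
  assumes "cheb_rec (2 * x) a" "cheb_rec (2 * x) b"
  shows "a (Suc m + p) * b (Suc m + q) - a m * b (Suc (Suc m) + p + q)
       = U p * (a 1 * b (Suc q) - a 0 * b (Suc (Suc q)))"
  using assms cheb_rec_U U_0 U_1 by (rule cheb_rec_product_identity)

lemma UU_UU_identity:
  "U (Suc m + i) * U (Suc m + j) - U m * U (Suc (Suc m) + i + j) = U i * U j"
proof -
  have "U (Suc m + i) * U (Suc m + j) - U m * U (Suc (Suc m) + i + j)
      = U i * (U 1 * U (Suc j) - U 0 * U (Suc (Suc j)))"
    by (rule product_identity[OF cheb_rec_U cheb_rec_U])
  also have "\<dots> = U i * U j"
    by (simp add: U_Suc_Suc)
  finally show ?thesis .
qed

lemma TT_TT_identity:
  "T (Suc m + i) * T (Suc m + j) - T m * T (Suc (Suc m) + i + j) = (1 - x\<^sup>2) * U i * U j"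
proof -
  have "T (Suc m + i) * T (Suc m + j) - T m * T (Suc (Suc m) + i + j)
      = U i * (T 1 * T (Suc j) - T 0 * T (Suc (Suc j)))"
    by (rule product_identity[OF cheb_rec_T cheb_rec_T])
  also have "\<dots> = (1 - x\<^sup>2) * U i * U j"
    by (simp add: x_T_diff)
  finally show ?thesis .
qed

lemma TU_UT_identity:
  "T (Suc m + i) * U (Suc m + j) - U m * T (Suc (Suc m) + i + j) = T i * U j"
proof -
  have "U (Suc m + j) * T (Suc m + i) - U m * T (Suc (Suc m) + j + i)
      = U j * (U 1 * T (Suc i) - U 0 * T (Suc (Suc i)))"
    by (rule product_identity[OF cheb_rec_U cheb_rec_T])
  also have "\<dots> = T i * U j"
    by (simp add: T_Suc_Suc)
  finally show ?thesis
    by (simp add: add_ac mult_ac)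
qed

lemma TU_TU_identity:
  "T (Suc m + i) * U (Suc m + j) - T m * U (Suc (Suc m) + i + j) = - (U i * T (j + 2))"
proof -
  have "T (Suc m + i) * U (Suc m + j) - T m * U (Suc (Suc m) + i + j)
      = U i * (T 1 * U (Suc j) - T 0 * U (Suc (Suc j)))"
    by (rule product_identity[OF cheb_rec_T cheb_rec_U])
  also have "\<dots> = - (U i * T (j + 2))"
    by (simp add: x_U_diff)
  finally show ?thesis .
qed

lemma U_cassini: "(U (Suc m))\<^sup>2 - U m * U (Suc (Suc m)) = 1"
  using UU_UU_identity[of m 0 0] by (simp add: power2_eq_square)

lemma TT_UU_identity_initial:
  assumes "i < 2" "j < 2"
  shows "T (Suc m + i) * T (Suc m + j) - (x\<^sup>2 - 1) * U m * U (m + i + j) = T i * T j"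
proof -
  have "T (Suc m + i) * T (Suc m + j) - (x\<^sup>2 - 1) * U m * U (m + i + j)
      = x ^ (i + j) * ((U (Suc m))\<^sup>2 - U m * U (Suc (Suc m)))"
    using assms by (auto simp: less_2_cases_iff T_Suc_eq U_Suc_Suc power2_eq_square algebra_simps)
  also have "\<dots> = T i * T j"
    using assms by (auto simp: less_2_cases_iff U_cassini)
  finally show ?thesis .
qed

lemma TT_UU_identity:
  "T (Suc m + i) * T (Suc m + j) - (x\<^sup>2 - 1) * U m * U (m + i + j) = T i * T j"
proof -
  have "(\<lambda>i j. T (Suc m + i) * T (Suc m + j) - (x\<^sup>2 - 1) * U m * U (m + i + j))
      = (\<lambda>i j. T i * T j)"
  proof (rule cheb_rec_eqI2[where X = "2 * x"])
    fix i j :: nat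
    assume "i < 2" "j < 2"
    then show "T (Suc m + i) * T (Suc m + j) - (x\<^sup>2 - 1) * U m * U (m + i + j) = T i * T j"
      by (rule TT_UU_identity_initial)
  qed (simp_all add: cheb_rec_def T_Suc_Suc U_Suc_Suc algebra_simps)
  then show ?thesis by meson
qed

end

lemma chebyshev_cheb_T_cheb_U: "chebyshev [:0, 1:] cheb_T cheb_U"
proof -
  have X: "2 * [:0, 1:] = ([:0, 2:] :: 'a::comm_ring_1 poly)"
    by (simp add: numeral_poly)
  show ?thesis
    by unfold_locales (simp_all only: X cheb_rec_def One_nat_def cheb_T.simps cheb_U.simps simp_thms)
qed

theorem theorem2p1:
  fixes n i j :: nat
  assumes "n \<ge> 1"
  shows "((cheb_U (n+i) * cheb_U (n+j) - cheb_U (n-1) * cheb_U (n+1+i+j)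
            :: 'a::comm_ring_1 poly) = cheb_U i * cheb_U j) \<and>
         ((cheb_T (n+i) * cheb_T (n+j) - cheb_T (n-1) * cheb_T (n+1+i+j)
            :: 'a::comm_ring_1 poly) = (1 - [:0,1:]^2) * cheb_U i * cheb_U j) \<and>
         ((cheb_T (n+i) * cheb_U (n+j) - cheb_U (n-1) * cheb_T (n+1+i+j)
            :: 'a::comm_ring_1 poly) = cheb_T i * cheb_U j) \<and>
         ((cheb_T (n+i) * cheb_U (n+j) - cheb_T (n-1) * cheb_U (n+1+i+j)
            :: 'a::comm_ring_1 poly) = - (cheb_U i * cheb_T (j+2))) \<and>
         ((cheb_T (n+i) * cheb_T (n+j) - ([:0,1:]^2 - 1) * cheb_U (n-1) * cheb_U (n-1+i+j)
            :: 'a::comm_ring_1 poly) = cheb_T i * cheb_T j)"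
proof -
  interpret chebyshev "[:0, 1:] :: 'a poly" cheb_T cheb_U
    by (rule chebyshev_cheb_T_cheb_U)
  obtain m where n: "n = Suc m"
    using assms by (cases n) auto
  have idx: "n + 1 + i + j = Suc (Suc m) + i + j" "n - 1 = m" "n - 1 + i + j = m + i + j"
    "n + i = Suc m + i" "n + j = Suc m + j"
    by (simp_all add: n)
  show ?thesis
    unfolding idx
    using UU_UU_identity TT_TT_identity TU_UT_identity TU_TU_identity TT_UU_identity by blast
qed

end
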